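(* Let $G$ be a subgroup of $S_n$, $\chi$ a character of $G$ and $\theta\in S_n$. Then $$d_\chi^G(P_\theta+P_{\theta^{-1}})=2^{F+2t}\,d_\chi^G(S_\theta),$$ where $F$ is the number of fixed points of $\theta$ and $t$ is the number of transpositions (2-cycles) in the disjoint cycles expression of $\theta$.
   Context: $d_\chi^G(A)=\sum_{\sigma\in G}\chi(\sigma)\prod_{i=1}^nA_{i\,\sigma(i)}$, where $\chi$ is the trace of a finite-dimensional complex representation of $G$. For $\theta\in S_n$, $(P_\theta)_{ij}=1$ if $\theta^{-1}(i)=j$ and $0$ otherwise. $S_\theta$ is the $n\times n$ symmetric $0/1$ matrix with $(S_\theta)_{ij}=1$ if $\theta(i)=j$ or $\theta^{-1}(i)=j$, and $0$ otherwise. *)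

theory Defs
  imports "HOL-Analysis.Analysis" "HOL-Algebra.Sym_Groups"
begin

text \<open>S_n is realised as sym_group n: permutations of {1..n}, multiplication is composition.\<close>

definition is_rep :: "(nat \<Rightarrow> nat) set \<Rightarrow> ((nat \<Rightarrow> nat) \<Rightarrow> complex^'d^'d) \<Rightarrow> bool" where
  "is_rep G \<rho> \<longleftrightarrow> \<rho> id = mat 1 \<and> (\<forall>\<sigma>\<in>G. \<forall>\<tau>\<in>G. \<rho> (\<sigma> \<circ> \<tau>) = \<rho> \<sigma> ** \<rho> \<tau>)"

definition dchi :: "nat \<Rightarrow> (nat \<Rightarrow> nat) set \<Rightarrow> ((nat \<Rightarrow> nat) \<Rightarrow> complex) \<Rightarrow> (nat \<Rightarrow> nat \<Rightarrow> complex) \<Rightarrow> complex" where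
  "dchi n G chr A = (\<Sum>\<sigma>\<in>G. chr \<sigma> * (\<Prod>i\<in>{1..n}. A i (\<sigma> i)))"

definition perm_mat :: "(nat \<Rightarrow> nat) \<Rightarrow> nat \<Rightarrow> nat \<Rightarrow> complex" where
  "perm_mat \<theta> i j = (if inv_into UNIV \<theta> i = j then 1 else 0)"

definition sym_perm_mat :: "(nat \<Rightarrow> nat) \<Rightarrow> nat \<Rightarrow> nat \<Rightarrow> complex" where
  "sym_perm_mat \<theta> i j = (if \<theta> i = j \<or> inv_into UNIV \<theta> i = j then 1 else 0)"

definition num_fixed :: "nat \<Rightarrow> (nat \<Rightarrow> nat) \<Rightarrow> nat" where
  "num_fixed n \<theta> = card {i \<in> {1..n}. \<theta> i = i}"

definition num_2cycles :: "nat \<Rightarrow> (nat \<Rightarrow> nat) \<Rightarrow> nat" where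
  "num_2cycles n \<theta> = card {{i, \<theta> i} | i. i \<in> {1..n} \<and> \<theta> i \<noteq> i \<and> \<theta> (\<theta> i) = i}"

end

theory Submission
  imports Defs
begin

text \<open>Row i of \<open>P\<^sub>\<theta> + P\<^sub>\<theta>\<^sub>\<inverse>\<close> has its ones at \<open>\<theta>\<inverse> i\<close> and \<open>\<theta> i\<close>; these coincide exactly
  when \<open>\<theta>\<^sup>2 i = i\<close>, i.e. when i is a fixed point or lies in a 2-cycle. So the matrix is
  \<open>S\<^sub>\<theta>\<close> with those rows doubled, and since \<open>d\<^sub>\<chi>\<^sup>G\<close> is multilinear in the rows it picks up a
  factor 2 for each of the \<open>F + 2t\<close> such rows. Neither the group structure of G nor the
  fact that \<open>\<chi>\<close> is a character plays any role.\<close>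

lemma dchi_scale_rows:
  "dchi n G chr (\<lambda>i j. c i * A i j) = (\<Prod>i\<in>{1..n}. c i) * dchi n G chr A"
  by (simp add: dchi_def prod.distrib sum_distrib_left mult_ac)

lemma perm_mat_add_perm_mat_inv:
  assumes "bij \<theta>"
  shows "perm_mat \<theta> i j + perm_mat (inv_into UNIV \<theta>) i j
        = (if \<theta> (\<theta> i) = i then 2 else 1) * sym_perm_mat \<theta> i j"
proof -
  have inv_inv: "inv_into UNIV (inv_into UNIV \<theta>) = \<theta>"
    using assms by (simp add: inv_inv_eq bij_is_surj bij_is_inj)
  have "\<theta> (\<theta> i) = i \<longleftrightarrow> \<theta> i = inv_into UNIV \<theta> i"
    using assms by (metis bij_inv_eq_iff)
  then show ?thesis
    unfolding perm_mat_def sym_perm_mat_def inv_inv by auto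
qed

lemma card_2cycle_points:
  assumes "\<theta> permutes {1..n}"
  shows "card {i \<in> {1..n}. \<theta> i \<noteq> i \<and> \<theta> (\<theta> i) = i} = 2 * num_2cycles n \<theta>"
proof -
  define Tw where "Tw = {i \<in> {1..n}. \<theta> i \<noteq> i \<and> \<theta> (\<theta> i) = i}"
  define C where "C = {{i, \<theta> i} | i. i \<in> {1..n} \<and> \<theta> i \<noteq> i \<and> \<theta> (\<theta> i) = i}"
  have C_image: "C = (\<lambda>i. {i, \<theta> i}) ` Tw"
    unfolding C_def Tw_def by auto
  have in_range: "\<theta> i \<in> {1..n} \<longleftrightarrow> i \<in> {1..n}" for i
    by (rule permutes_in_image[OF assms])
  have cycle_of_member: "c = {x, \<theta> x}" if "c \<in> C" "x \<in> c" for c x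
    using that unfolding C_def by (auto simp: insert_commute)
  have "\<Union>C = Tw"
    unfolding C_image Tw_def using in_range by fastforce
  moreover have "2 * card C = card (\<Union>C)"
  proof (rule card_partition)
    show "finite C" "finite (\<Union>C)"
      using \<open>\<Union>C = Tw\<close> by (auto simp: C_image Tw_def)
    show "card c = 2" if "c \<in> C" for c
      using that unfolding C_def by auto
    show "c1 \<inter> c2 = {}" if "c1 \<in> C" "c2 \<in> C" "c1 \<noteq> c2" for c1 c2
      using that cycle_of_member by blast
  qed
  ultimately show ?thesis
    unfolding num_2cycles_def Tw_def[symmetric] C_def[symmetric] by simp
qed

lemma card_involutive_points:
  assumes "\<theta> permutes {1..n}"
  shows "card {i \<in> {1..n}. \<theta> (\<theta> i) = i} = num_fixed n \<theta> + 2 * num_2cycles n \<theta>"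
proof -
  have "{i \<in> {1..n}. \<theta> (\<theta> i) = i}
      = {i \<in> {1..n}. \<theta> i = i} \<union> {i \<in> {1..n}. \<theta> i \<noteq> i \<and> \<theta> (\<theta> i) = i}"
    by auto
  then have "card {i \<in> {1..n}. \<theta> (\<theta> i) = i}
      = card {i \<in> {1..n}. \<theta> i = i} + card {i \<in> {1..n}. \<theta> i \<noteq> i \<and> \<theta> (\<theta> i) = i}"
    by (simp add: card_Un_disjoint disjoint_iff)
  then show ?thesis
    unfolding num_fixed_def card_2cycle_points[OF assms] .
qed

theorem mainTheorem10:
  fixes n :: nat and G :: "(nat \<Rightarrow> nat) set" and chr :: "(nat \<Rightarrow> nat) \<Rightarrow> complex"
    and \<rho> :: "(nat \<Rightarrow> nat) \<Rightarrow> complex^'d^'d" and \<theta> :: "nat \<Rightarrow> nat"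
  assumes "subgroup G (sym_group n)"
    and "is_rep G \<rho>"
    and "\<forall>\<sigma>\<in>G. chr \<sigma> = trace (\<rho> \<sigma>)"
    and "\<theta> permutes {1..n}"
  shows "dchi n G chr (\<lambda>i j. perm_mat \<theta> i j + perm_mat (inv_into UNIV \<theta>) i j)
         = 2 ^ (num_fixed n \<theta> + 2 * num_2cycles n \<theta>) * dchi n G chr (sym_perm_mat \<theta>)"
proof -
  have "dchi n G chr (\<lambda>i j. perm_mat \<theta> i j + perm_mat (inv_into UNIV \<theta>) i j)
      = (\<Prod>i\<in>{1..n}. if \<theta> (\<theta> i) = i then 2 else 1) * dchi n G chr (sym_perm_mat \<theta>)"
    using perm_mat_add_perm_mat_inv[OF permutes_bij[OF assms(4)]]
    by (simp add: dchi_scale_rows)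
  also have "(\<Prod>i\<in>{1..n}. if \<theta> (\<theta> i) = i then 2 else 1 :: complex)
      = 2 ^ card {i \<in> {1..n}. \<theta> (\<theta> i) = i}"
    by (simp add: prod.If_cases Int_def conj_commute)
  finally show ?thesis
    unfolding card_involutive_points[OF assms(4)] .
qed

end
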